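(* Let $C\in M_n(\mathbb{C})$ be a nilpotent contraction with $n\le4$, and let $T_1,T_2$ be as defined below. If $T_2(t,\lambda)\equiv0$, then $T_1(t,\mu)\equiv0$. Equivalently, if $Q_C(x,y)\in\mathbb{C}[xy]$ then $P_C(x,y)\in\mathbb{C}[xy]$.
   Context: A contraction is a matrix with $\|C\|\le1$. Let $D=I-C^*C$, $H(t)=\tfrac12(e^{-it}C+e^{it}C^* )$, $K(t)=\tfrac{i}{2}(e^{it}C^*-e^{-it}C)$, $T_1(t,\mu)=\operatorname{tr}((\mu I-H(t))^{-1}K(t))$, $T_2(t,\lambda)=\operatorname{tr}((\lambda^2I-\lambda H(t)-\frac14D)^{-1}\lambda K(t))$, regarded as rational functions of $\mu$, resp. $\lambda$, for each real $t$; $\equiv 0$ means vanishing identically in all variables. $P_C(x,y)=\det(I-xC-yC^* )$, $Q_C(x,y)=\det(I-xC-yC^*-xyD)$, and $\mathbb{C}[xy]$ is the set of polynomials in the product $xy$ alone. *)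

theory Defs
  imports "HOL-Analysis.Analysis"
begin

definition msc :: "complex \<Rightarrow> complex^'n^'n \<Rightarrow> complex^'n^'n" (infixr "*m" 75) where
  "c *m A = (\<chi> i j. c * A $ i $ j)"

definition adj :: "complex^'n^'n \<Rightarrow> complex^'n^'n" where
  "adj C = (\<chi> i j. cnj (C $ j $ i))"

primrec mpow :: "complex^'n^'n \<Rightarrow> nat \<Rightarrow> complex^'n^'n" where
  "mpow C 0 = mat 1"
| "mpow C (Suc k) = C ** mpow C k"

definition nilpotent_mat :: "complex^'n^'n \<Rightarrow> bool" where
  "nilpotent_mat C \<longleftrightarrow> (\<exists>k. mpow C k = 0)"

definition contraction :: "complex^'n^'n \<Rightarrow> bool" where
  "contraction C \<longleftrightarrow> (\<forall>v. norm (C *v v) \<le> norm v)"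

definition defect :: "complex^'n^'n \<Rightarrow> complex^'n^'n" where
  "defect C = mat 1 - adj C ** C"

definition Hm :: "complex^'n^'n \<Rightarrow> real \<Rightarrow> complex^'n^'n" where
  "Hm C t = (1/2 :: complex) *m (exp (- \<i> * of_real t) *m C + exp (\<i> * of_real t) *m adj C)"

definition Km :: "complex^'n^'n \<Rightarrow> real \<Rightarrow> complex^'n^'n" where
  "Km C t = (\<i> / 2) *m (exp (\<i> * of_real t) *m adj C - exp (- \<i> * of_real t) *m C)"

definition T1 :: "complex^'n^'n \<Rightarrow> real \<Rightarrow> complex \<Rightarrow> complex" where
  "T1 C t \<mu> = trace (matrix_inv (\<mu> *m mat 1 - Hm C t) ** Km C t)"

definition T1_defined :: "complex^'n^'n \<Rightarrow> real \<Rightarrow> complex \<Rightarrow> bool" where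
  "T1_defined C t \<mu> \<longleftrightarrow> invertible (\<mu> *m mat 1 - Hm C t)"

definition T2 :: "complex^'n^'n \<Rightarrow> real \<Rightarrow> complex \<Rightarrow> complex" where
  "T2 C t lam = trace (matrix_inv (lam\<^sup>2 *m mat 1 - lam *m Hm C t - (1/4) *m defect C)
                        ** (lam *m Km C t))"

definition T2_defined :: "complex^'n^'n \<Rightarrow> real \<Rightarrow> complex \<Rightarrow> bool" where
  "T2_defined C t lam \<longleftrightarrow> invertible (lam\<^sup>2 *m mat 1 - lam *m Hm C t - (1/4) *m defect C)"

end

theory Submission
  imports Defs "HOL-Computational_Algebra.Fundamental_Theorem_Algebra"
begin

(* With w = exp (-i t), both T1 and T2 are i times the logarithmic derivative
   w d/dw log det A(w) of a Laurent pencil A(w) = L/w + M + w U, and such a derivative vanishes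
   on the unit circle iff det A(w) does not depend on w.  So T2 = 0 says that
   det (lam^2 - lam H(w) - D/4) is independent of w, which amounts to Q_C(x, y) = Q_C(xy, 1), and
   T1 = 0 follows once det (mu - H(w)) is independent of w, where H(w) = (w C + C^*/w) / 2.

   For nilpotent C put Y_c = c C + (I - C^*/c)^(-1).  Then
   (I - C^*/c)(I - x Y_c) = I - c x C - C^*/c - x D, so det (I - x Y_c) = Q_C(cx, 1/c) = Q_C(x, 1)
   does not depend on c; comparing tr (Y_c^2) for different c gives tr (C C^{*k}) = 0 for k >= 2.
   Together with nilpotency this kills the trace of every word in C, C^* of length at most 4 with
   different numbers of letters C and C^*, so tr (H(w)^k) does not depend on w for k <= 4.  For
   n <= 4 Newton's identities then make the characteristic polynomial of H(w) independent of w. *)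

lemma msc_component [simp]: "(c *m A) $ i $ j = c * A $ i $ j"
  by (simp add: msc_def)

lemma msc_mult_left [simp]: "(c *m A) ** B = c *m (A ** B)"
  by (simp add: vec_eq_iff matrix_matrix_mult_def sum_distrib_left mult.assoc)

lemma msc_mult_right [simp]: "A ** (c *m B) = c *m (A ** B)"
  by (simp add: vec_eq_iff matrix_matrix_mult_def sum_distrib_left mult_ac)

lemma msc_add: "c *m (A + B) = c *m A + c *m B"
  by (simp add: vec_eq_iff algebra_simps)

lemma msc_diff: "c *m (A - B) = c *m A - c *m B"
  by (simp add: vec_eq_iff algebra_simps)

lemma msc_uminus [simp]: "c *m (- A) = - (c *m A)"
  by (simp add: vec_eq_iff)

lemma msc_msc [simp]: "c *m (d *m A) = (c * d) *m A"
  by (simp add: vec_eq_iff)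

lemma msc_one [simp]: "1 *m A = A"
  by (simp add: vec_eq_iff)

lemma msc_zero [simp]: "0 *m A = 0" "c *m 0 = 0"
  by (simp_all add: vec_eq_iff)

lemma matrix_add_rdistrib: "(A + B) ** C = A ** C + B ** (C :: 'a::semiring_1^'n^'n)"
  by (simp add: vec_eq_iff matrix_matrix_mult_def sum.distrib algebra_simps)

lemma matrix_diff_rdistrib: "(A - B) ** C = A ** C - B ** (C :: 'a::ring_1^'n^'n)"
  by (simp add: vec_eq_iff matrix_matrix_mult_def sum_subtractf algebra_simps)

lemma matrix_diff_ldistrib: "C ** (A - B) = C ** A - C ** (B :: 'a::ring_1^'n^'n)"
  by (simp add: vec_eq_iff matrix_matrix_mult_def sum_subtractf algebra_simps)

lemma matrix_neg_left: "(- A) ** B = - (A ** (B :: 'a::ring_1^'n^'n))"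
  by (simp add: vec_eq_iff matrix_matrix_mult_def sum_negf)

lemma matrix_sum_left: "sum f S ** B = (\<Sum>x\<in>S. f x ** (B :: 'a::comm_ring_1^'n^'n))"
  by (induction S rule: infinite_finite_induct) (auto simp: matrix_add_rdistrib)

lemma matrix_sum_right: "B ** sum f S = (\<Sum>x\<in>S. B ** (f x :: 'a::comm_ring_1^'n^'n))"
  by (induction S rule: infinite_finite_induct) (auto simp: matrix_add_ldistrib)

lemma trace_msc [simp]: "trace (c *m A) = c * trace A"
  by (simp add: trace_def sum_distrib_left)

lemma trace_neg: "trace (- A) = - trace (A :: 'a::comm_ring_1^'n^'n)"
  by (simp add: trace_def sum_negf)

lemma trace_sum: "trace (sum f S) = (\<Sum>x\<in>S. trace (f x :: 'a::comm_ring_1^'n^'n))"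
  by (simp add: trace_def; subst sum.swap; rule refl)

lemma trace_rotate3: "trace (X ** (Y ** Z)) = trace (Y ** (Z ** (X :: 'a::comm_ring_1^'n^'n)))"
  by (metis matrix_mul_assoc trace_mul_sym)

lemma trace_rotate4:
  "trace (W ** (X ** (Y ** Z))) = trace (X ** (Y ** (Z ** (W :: 'a::comm_ring_1^'n^'n))))"
  by (metis matrix_mul_assoc trace_mul_sym)

lemma det_msc: "det (c *m A) = c ^ CARD('n) * det (A :: complex^'n^'n)"
  by (simp add: det_def prod.distrib sum_distrib_left mult_ac)

lemma matrix_inv_left:
  assumes "invertible (A :: 'a::semiring_1^'n^'n)"
  shows "matrix_inv A ** A = mat 1"
  using assms unfolding invertible_def matrix_inv_def by (rule someI_ex[THEN conjunct2])

lemma trace_matrix_inv_mult: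
  "invertible A \<Longrightarrow> trace (matrix_inv A ** A) = of_nat CARD('n)"
  for A :: "'a::comm_semiring_1^'n^'n"
  by (simp add: matrix_inv_left trace_I)

lemma adj_component [simp]: "adj A $ i $ j = cnj (A $ j $ i)"
  by (simp add: adj_def)

lemma adj_mult: "adj (A ** B) = adj B ** adj A"
  by (simp add: vec_eq_iff matrix_matrix_mult_def mult.commute)

lemma adj_adj [simp]: "adj (adj A) = A"
  by (simp add: vec_eq_iff)

lemma adj_mat [simp]: "adj (mat 1) = mat 1"
  by (simp add: vec_eq_iff mat_def)

lemma adj_zero [simp]: "adj 0 = 0"
  by (simp add: vec_eq_iff)

lemma trace_adj: "trace (adj A) = cnj (trace A)"
  by (simp add: trace_def)

lemma mpow_add: "mpow A (k + l) = mpow A k ** mpow A l"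
  by (induction k) (simp_all add: matrix_mul_assoc)

lemma mpow_Suc_right: "mpow A (Suc k) = mpow A k ** A"
  using mpow_add[of A k 1] by simp

lemma mpow_adj: "adj (mpow A k) = mpow (adj A) k"
  by (induction k) (simp_all add: adj_mult flip: mpow_Suc_right)

lemma mpow_eq_0_mono: "mpow A k = 0 \<Longrightarrow> k \<le> l \<Longrightarrow> mpow A l = 0"
  by (metis le_add_diff_inverse mpow_add times0_left)

subsection \<open>Polynomial matrices and Jacobi's formula\<close>

definition pmat_eval :: "'a::comm_ring_1 poly^'n^'n \<Rightarrow> 'a \<Rightarrow> 'a^'n^'n" where
  "pmat_eval A s = (\<chi> i j. poly (A $ i $ j) s)"

definition pmat_deriv :: "'a::idom poly^'n^'n \<Rightarrow> 'a poly^'n^'n" where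
  "pmat_deriv A = (\<chi> i j. pderiv (A $ i $ j))"

lemma pmat_eval_component [simp]: "pmat_eval A s $ i $ j = poly (A $ i $ j) s"
  by (simp add: pmat_eval_def)

lemma poly_det: "poly (det A) s = det (pmat_eval A s)"
  by (simp add: det_def poly_sum poly_prod)

definition det_deriv :: "'a::comm_ring_1^'n^'n \<Rightarrow> 'a^'n^'n \<Rightarrow> 'a" where
  "det_deriv A V = (\<Sum>k\<in>UNIV. det (\<chi> i. if i = k then V $ i else A $ i))"

lemma poly_det_deriv: "poly (det_deriv A V) s = det_deriv (pmat_eval A s) (pmat_eval V s)"
proof -
  have "(\<chi> i. if i = k then pmat_eval V s $ i else pmat_eval A s $ i) =
        pmat_eval (\<chi> i. if i = k then V $ i else A $ i) s" for k
    by (simp add: vec_eq_iff)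
  then show ?thesis
    by (simp add: det_deriv_def poly_sum poly_det)
qed

lemma det_row_replace:
  "det (\<chi> i. if i = k then V $ i else A $ i) =
   (\<Sum>p | p permutes (UNIV::'n set). of_int (sign p) * (V $ k $ p k * (\<Prod>i\<in>UNIV - {k}. A $ i $ p i)))"
  for A V :: "'a::comm_ring_1^'n^'n"
proof -
  have "(\<Prod>i\<in>UNIV. (\<chi> i. if i = k then V $ i else A $ i) $ i $ p i) =
        V $ k $ p k * (\<Prod>i\<in>UNIV - {k}. A $ i $ p i)" for p :: "'n \<Rightarrow> 'n"
  proof -
    have "(\<Prod>i\<in>UNIV - {k}. (\<chi> i. if i = k then V $ i else A $ i) $ i $ p i) =
          (\<Prod>i\<in>UNIV - {k}. A $ i $ p i)"
      by (rule prod.cong) auto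
    then show ?thesis
      by (simp add: prod.remove[of UNIV k])
  qed
  then show ?thesis
    by (simp add: det_def)
qed

lemma pderiv_det: "pderiv (det A) = det_deriv A (pmat_deriv A)"
  for A :: "'a::idom poly^'n^'n"
proof -
  have "pderiv (det A) = (\<Sum>p | p permutes (UNIV::'n set). of_int (sign p) *
          (\<Sum>k\<in>UNIV. (\<Prod>i\<in>UNIV - {k}. A $ i $ p i) * pderiv (A $ k $ p k)))"
    unfolding det_def by (simp add: higher_pderiv_sum[of 1, simplified] pderiv_prod of_int_poly pderiv_smult)
  also have "\<dots> = (\<Sum>k\<in>UNIV. \<Sum>p | p permutes (UNIV::'n set). of_int (sign p) *
          (pderiv (A $ k $ p k) * (\<Prod>i\<in>UNIV - {k}. A $ i $ p i)))"
    by (simp add: sum_distrib_left mult_ac; subst sum.swap; rule refl)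
  finally show ?thesis
    by (simp add: det_deriv_def det_row_replace pmat_deriv_def)
qed

lemma det_deriv_eq_trace:
  fixes A V B :: "'a::field^'n^'n"
  assumes "B ** A = mat 1"
  shows "det_deriv A V = det A * trace (V ** B)"
proof -
  \<comment> \<open>Row \<open>k\<close> of \<open>V\<close> is the combination \<open>V $ k v* B\<close> of the rows of \<open>A\<close>; then apply Cramer's rule.\<close>
  have row_eq: "(\<chi> i. if i = k then V $ i else A $ i) =
     (\<chi> i. if i = k then (\<Sum>j\<in>UNIV. (V $ k v* B) $ j *s row j A) else row i A)" for k
  proof -
    have "V $ k = (V $ k v* B) v* A"
      by (simp add: vector_matrix_mul_assoc assms)
    also have "\<dots> = (\<Sum>j\<in>UNIV. (V $ k v* B) $ j *s row j A)"
      by (simp add: vec_eq_iff vector_matrix_mult_def row_def sum_component)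
    finally show ?thesis
      by (simp add: vec_eq_iff row_def)
  qed
  have "det_deriv A V = (\<Sum>k\<in>UNIV. (V $ k v* B) $ k * det A)"
    unfolding det_deriv_def row_eq cramer_lemma_transpose by simp
  also have "\<dots> = det A * trace (V ** B)"
    by (simp add: trace_def vector_matrix_mult_def matrix_matrix_mult_def sum_distrib_left mult_ac)
  finally show ?thesis .
qed

lemma poly_pderiv_det:
  fixes A :: "'a::field poly^'n^'n"
  assumes "B ** pmat_eval A s = mat 1"
  shows "poly (pderiv (det A)) s = poly (det A) s * trace (pmat_eval (pmat_deriv A) s ** B)"
  by (simp add: pderiv_det poly_det_deriv det_deriv_eq_trace[OF assms] poly_det)

lemma infinite_nonroots:
  fixes q :: "'a::{idom,ring_char_0} poly"
  assumes "infinite S" "q \<noteq> 0"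
  shows "infinite {s\<in>S. poly q s \<noteq> 0}"
proof -
  have "S \<subseteq> {s\<in>S. poly q s \<noteq> 0} \<union> {s. poly q s = 0}"
    by auto
  then show ?thesis
    using assms finite_subset poly_roots_finite by blast
qed

lemma poly_eq_on_infinite:
  fixes p q :: "'a::idom poly"
  assumes "infinite S" "\<And>s. s \<in> S \<Longrightarrow> poly p s = poly q s"
  shows "p = q"
proof (rule ccontr)
  assume "p \<noteq> q"
  then have "finite {s. poly (p - q) s = 0}"
    by (intro poly_roots_finite) simp
  moreover have "S \<subseteq> {s. poly (p - q) s = 0}"
    using assms(2) by auto
  ultimately show False
    using assms(1) finite_subset by blast
qed

subsection \<open>The reciprocal characteristic polynomial and Newton's identities\<close>

definition lin_pmat :: "complex^'n^'n \<Rightarrow> complex^'n^'n \<Rightarrow> complex poly^'n^'n" where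
  "lin_pmat A B = (\<chi> i j. [:A $ i $ j, B $ i $ j:])"

definition const_pmat :: "complex^'n^'n \<Rightarrow> complex poly^'n^'n" where
  "const_pmat A = (\<chi> i j. [:A $ i $ j:])"

definition recip_charpoly :: "complex^'n^'n \<Rightarrow> complex poly" where
  "recip_charpoly X = det (lin_pmat (mat 1) (- X))"

lemma pmat_eval_lin_pmat: "pmat_eval (lin_pmat A B) s = A + s *m B"
  by (simp add: vec_eq_iff lin_pmat_def)

lemma pmat_deriv_lin_pmat: "pmat_deriv (lin_pmat A B) = const_pmat B"
  by (simp add: vec_eq_iff lin_pmat_def const_pmat_def pmat_deriv_def pderiv_pCons)

lemma pmat_eval_const_pmat [simp]: "pmat_eval (const_pmat A) s = A"
  by (simp add: vec_eq_iff const_pmat_def)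

lemma poly_recip_charpoly: "poly (recip_charpoly X) s = det (mat 1 - s *m X)"
  by (simp add: recip_charpoly_def poly_det pmat_eval_lin_pmat)

lemma coeff_0_recip_charpoly [simp]: "coeff (recip_charpoly X) 0 = 1"
  by (simp add: poly_0_coeff_0[symmetric] poly_recip_charpoly)

lemma recip_charpoly_nonzero: "recip_charpoly X \<noteq> 0"
  using coeff_0_recip_charpoly[of X] by (metis coeff_0 zero_neq_one)

lemma degree_recip_charpoly: "degree (recip_charpoly X) \<le> CARD('n)"
  for X :: "complex^'n^'n"
proof -
  have "degree (\<Prod>i\<in>UNIV. lin_pmat (mat 1) (- X) $ i $ p i) \<le> CARD('n)" for p :: "'n \<Rightarrow> 'n"
  proof -
    have "degree (\<Prod>i\<in>UNIV. lin_pmat (mat 1) (- X) $ i $ p i) \<le>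
          (\<Sum>i\<in>(UNIV::'n set). degree (lin_pmat (mat 1) (- X) $ i $ p i))"
      using degree_prod_sum_le[of UNIV "\<lambda>i. lin_pmat (mat 1) (- X) $ i $ p i"] by (simp add: o_def)
    also have "\<dots> \<le> (\<Sum>i\<in>(UNIV::'n set). 1)"
      by (rule sum_mono) (simp add: lin_pmat_def)
    finally show ?thesis
      by simp
  qed
  then show ?thesis
    unfolding recip_charpoly_def det_def
    by (intro degree_sum_le) (auto simp: of_int_poly intro: order.trans[OF degree_smult_le])
qed

lemma trace_resolvent_expansion:
  assumes "B ** (mat 1 - s *m X) = mat 1"
  shows "trace (B ** X) =
    (\<Sum>k<N. s ^ k * trace (mpow X (Suc k))) + s ^ N * trace (B ** mpow X (Suc N))"
proof (induction N)
  case 0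
  then show ?case
    by simp
next
  case (Suc N)
  have "B = mat 1 + s *m (B ** X)"
    using assms by (simp add: matrix_diff_ldistrib algebra_simps)
  then have "B ** mpow X (Suc N) = mpow X (Suc N) + s *m (B ** mpow X (Suc (Suc N)))"
    by (metis matrix_add_rdistrib matrix_mul_assoc matrix_mul_lid mpow.simps(2) msc_mult_left)
  then have "trace (B ** mpow X (Suc N)) =
             trace (mpow X (Suc N)) + s * trace (B ** mpow X (Suc (Suc N)))"
    by (simp add: trace_add)
  with Suc show ?case
    by (simp add: algebra_simps)
qed

text \<open>The remainder is expressed through \<open>det_deriv\<close>, which is a polynomial, because
  \<open>trace (matrix_inv (mat 1 - s *m X) ** mpow X (Suc N))\<close> is only a rational function of \<open>s\<close>.\<close>

lemma pderiv_recip_charpoly: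
  "pderiv (recip_charpoly X) =
     - (recip_charpoly X * (\<Sum>k<N. monom (trace (mpow X (Suc k))) k))
     - monom 1 N * det_deriv (lin_pmat (mat 1) (- X)) (const_pmat (mpow X (Suc N)))"
  (is "?lhs = ?rhs")
proof (rule poly_eq_on_infinite)
  show "infinite {s. poly (recip_charpoly X) s \<noteq> 0}"
    using infinite_nonroots[OF infinite_UNIV_char_0 recip_charpoly_nonzero] by simp
next
  fix s
  assume "s \<in> {s. poly (recip_charpoly X) s \<noteq> 0}"
  then have "invertible (mat 1 - s *m X)"
    by (simp add: poly_recip_charpoly invertible_det_nz)
  then have inv: "matrix_inv (mat 1 - s *m X) ** pmat_eval (lin_pmat (mat 1) (- X)) s = mat 1"
    by (simp add: pmat_eval_lin_pmat matrix_inv_left)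
  let ?B = "matrix_inv (mat 1 - s *m X)" and ?d = "poly (recip_charpoly X) s"
  have "poly ?lhs s = - ?d * trace (?B ** X)"
    using poly_pderiv_det[OF inv]
    by (simp add: recip_charpoly_def pmat_deriv_lin_pmat matrix_neg_left trace_neg trace_mul_sym[of X])
  also have "\<dots> = - ?d * (\<Sum>k<N. s ^ k * trace (mpow X (Suc k)))
                     - s ^ N * (?d * trace (mpow X (Suc N) ** ?B))"
    using trace_resolvent_expansion[OF matrix_inv_left[OF \<open>invertible (mat 1 - s *m X)\<close>], of N]
    by (simp add: trace_mul_sym[of "mpow X (Suc N)"] algebra_simps del: mpow.simps)
  also have "\<dots> = poly ?rhs s"
    using det_deriv_eq_trace[OF inv, of "mpow X (Suc N)"]
    by (simp add: poly_det_deriv poly_sum poly_monom sum_distrib_left sum_negf mult_ac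
        pmat_eval_lin_pmat poly_recip_charpoly del: mpow.simps)
  finally show "poly ?lhs s = poly ?rhs s" .
qed

lemma newton_identity:
  "of_nat (Suc k) * coeff (recip_charpoly X) (Suc k) =
     - (\<Sum>j\<le>k. coeff (recip_charpoly X) j * trace (mpow X (Suc k - j)))"
proof -
  let ?p = "recip_charpoly X"
  have "coeff (pderiv ?p) k = - coeff (?p * (\<Sum>i<Suc k. monom (trace (mpow X (Suc i))) i)) k"
    by (subst pderiv_recip_charpoly[of X "Suc k"]) (simp add: coeff_monom_mult)
  also have "\<dots> = - (\<Sum>j\<le>k. coeff ?p j * trace (mpow X (Suc k - j)))"
  proof -
    have "coeff (\<Sum>i<Suc k. monom (trace (mpow X (Suc i))) i) (k - j) = trace (mpow X (Suc k - j))"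
      if "j \<le> k" for j
      using that by (simp add: coeff_sum coeff_monom Suc_diff_le del: mpow.simps)
    then show ?thesis
      by (simp add: coeff_mult del: mpow.simps)
  qed
  finally show ?thesis
    by (simp add: coeff_pderiv mult.commute)
qed

lemma trace_mpow_eq_if_recip_charpoly_eq:
  assumes "recip_charpoly X = recip_charpoly Y" "0 < k"
  shows "trace (mpow X k) = trace (mpow Y k)"
  using assms(2)
proof (induction k rule: less_induct)
  case (less k)
  then obtain l where k: "k = Suc l"
    using gr0_implies_Suc by blast
  let ?c = "coeff (recip_charpoly X)"
  have sum_split: "(\<Sum>j\<le>l. f j) = f 0 + (\<Sum>j\<in>{1..l}. f j)" for f :: "nat \<Rightarrow> complex"
    using sum.atLeast_Suc_atMost[of 0 l f] by (simp add: atLeast0AtMost)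
  have "(\<Sum>j\<in>{1..l}. ?c j * trace (mpow X (Suc l - j))) =
        (\<Sum>j\<in>{1..l}. ?c j * trace (mpow Y (Suc l - j)))"
    using less.IH k by (intro sum.cong refl) auto
  then show ?case
    using newton_identity[of l X] newton_identity[of l Y] assms(1)
    by (simp add: k sum_split del: mpow.simps)
qed

lemma recip_charpoly_eq_if_trace_mpow_eq:
  fixes X Y :: "complex^'n^'n"
  assumes "\<And>k. 0 < k \<Longrightarrow> k \<le> CARD('n) \<Longrightarrow> trace (mpow X k) = trace (mpow Y k)"
  shows "recip_charpoly X = recip_charpoly Y"
proof (rule poly_eqI)
  fix k
  show "coeff (recip_charpoly X) k = coeff (recip_charpoly Y) k"
  proof (induction k rule: less_induct)
    case (less k)
    show ?case
    proof (cases k)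
      case 0
      then show ?thesis
        by simp
    next
      case (Suc l)
      show ?thesis
      proof (cases "k \<le> CARD('n)")
        case True
        have "(\<Sum>j\<le>l. coeff (recip_charpoly X) j * trace (mpow X (Suc l - j))) =
              (\<Sum>j\<le>l. coeff (recip_charpoly Y) j * trace (mpow Y (Suc l - j)))"
          using less.IH assms Suc True by (intro sum.cong refl) auto
        then have "of_nat k * coeff (recip_charpoly X) k = of_nat k * coeff (recip_charpoly Y) k"
          using newton_identity[of l X] newton_identity[of l Y] Suc by simp
        moreover have "of_nat k \<noteq> (0::complex)"
          by (simp only: Suc of_nat_neq_0 not_False_eq_True)
        ultimately show ?thesis
          by simp
      next
        case False
        then show ?thesis
          using degree_recip_charpoly[of X] degree_recip_charpoly[of Y] by (simp add: coeff_eq_0)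
      qed
    qed
  qed
qed

lemma matrix_geometric_sum:
  "(mat 1 - s *m N) ** (\<Sum>j<m. s ^ j *m mpow N j) = mat 1 - s ^ m *m mpow N m"
proof (induction m)
  case 0
  then show ?case
    by simp
next
  case (Suc m)
  have "(mat 1 - s *m N) ** (s ^ m *m mpow N m) = s ^ m *m mpow N m - s ^ Suc m *m mpow N (Suc m)"
    by (simp add: matrix_diff_rdistrib msc_diff mult.commute)
  with Suc show ?case
    by (simp add: matrix_add_ldistrib)
qed

lemma recip_charpoly_nilpotent:
  assumes "mpow N m = 0"
  shows "recip_charpoly N = 1"
proof -
  have "poly (recip_charpoly N) s \<noteq> 0" for s
  proof
    assume "poly (recip_charpoly N) s = 0"
    moreover have "det (mat 1 - s *m N) * det (\<Sum>j<m. s ^ j *m mpow N j) = 1"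
      using matrix_geometric_sum[of s N m] assms by (simp flip: det_mul)
    ultimately show False
      by (simp add: poly_recip_charpoly)
  qed
  then have "constant (poly (recip_charpoly N))"
    using fundamental_theorem_of_algebra by blast
  then have "poly (recip_charpoly N) s = poly 1 s" for s
    unfolding constant_def by (metis poly_1 poly_0_coeff_0 coeff_0_recip_charpoly)
  then show ?thesis
    by (intro poly_eq_on_infinite[OF infinite_UNIV_char_0]) simp
qed

lemma det_one_sub_nilpotent: "mpow N m = 0 \<Longrightarrow> det (mat 1 - s *m N) = 1"
  using recip_charpoly_nilpotent by (metis poly_1 poly_recip_charpoly)

lemma trace_mpow_nilpotent:
  assumes "mpow N m = 0" "0 < k"
  shows "trace (mpow N k) = 0"
proof -
  have "recip_charpoly N = recip_charpoly 0"
    using recip_charpoly_nilpotent[OF assms(1)] recip_charpoly_nilpotent[of 0 1] by simp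
  moreover have "trace (mpow 0 k) = 0"
    using assms(2) by (cases k) (simp_all add: trace_def)
  ultimately show ?thesis
    using trace_mpow_eq_if_recip_charpoly_eq[OF _ assms(2)] by metis
qed

lemma det_sub_eq_if_recip_charpoly_eq:
  fixes X Y :: "complex^'n^'n"
  assumes "recip_charpoly X = recip_charpoly Y"
  shows "det (\<mu> *m mat 1 - X) = det (\<mu> *m mat 1 - Y)"
proof -
  have poly_charpoly: "poly (det (lin_pmat (- Z) (mat 1))) v = det (v *m mat 1 - Z)"
    for Z :: "complex^'n^'n" and v
    by (simp add: poly_det pmat_eval_lin_pmat)
  have "det (v *m mat 1 - Z) = v ^ CARD('n) * poly (recip_charpoly Z) (1 / v)"
    if "v \<noteq> 0" for Z :: "complex^'n^'n" and v
  proof -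
    have "v *m mat 1 - Z = v *m (mat 1 - (1 / v) *m Z)"
      using that by (simp add: msc_diff)
    then show ?thesis
      by (simp add: det_msc poly_recip_charpoly)
  qed
  then have "det (lin_pmat (- X) (mat 1)) = det (lin_pmat (- Y) (mat 1))"
    using assms by (intro poly_eq_on_infinite[of "- {0}"]) (simp_all add: poly_charpoly infinite_UNIV_char_0)
  then show ?thesis
    by (metis poly_charpoly)
qed

subsection \<open>Laurent pencils\<close>

definition pencil :: "complex^'n^'n \<Rightarrow> complex^'n^'n \<Rightarrow> complex^'n^'n \<Rightarrow> complex \<Rightarrow> complex^'n^'n"
  where "pencil L M U w = (1 / w) *m L + M + w *m U"

text \<open>Where the pencil is invertible, this is \<open>w d/dw log det (pencil L M U w)\<close>.\<close>

definition pencil_logderiv :: "complex^'n^'n \<Rightarrow> complex^'n^'n \<Rightarrow> complex^'n^'n \<Rightarrow> complex \<Rightarrow> complex"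
  where "pencil_logderiv L M U w =
    trace (matrix_inv (pencil L M U w) ** (w *m U - (1 / w) *m L))"

definition pencil_pmat :: "complex^'n^'n \<Rightarrow> complex^'n^'n \<Rightarrow> complex^'n^'n \<Rightarrow> complex poly^'n^'n"
  where "pencil_pmat L M U = (\<chi> i j. [:L $ i $ j, M $ i $ j, U $ i $ j:])"

lemma pmat_eval_pencil_pmat: "w \<noteq> 0 \<Longrightarrow> pmat_eval (pencil_pmat L M U) w = w *m pencil L M U w"
  by (simp add: vec_eq_iff pencil_pmat_def pencil_def field_simps)

lemma pmat_eval_deriv_pencil_pmat: "pmat_eval (pmat_deriv (pencil_pmat L M U)) w = M + (2 * w) *m U"
  by (simp add: vec_eq_iff pencil_pmat_def pmat_deriv_def pderiv_pCons)

lemma poly_det_pencil_pmat: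
  "w \<noteq> 0 \<Longrightarrow> poly (det (pencil_pmat L M U)) w = w ^ CARD('n) * det (pencil L M U w)"
  for L M U :: "complex^'n^'n"
  by (simp add: poly_det pmat_eval_pencil_pmat det_msc)

lemma euler_eq_iff_monom:
  fixes p :: "'a::{idom,ring_char_0} poly"
  shows "monom 1 1 * pderiv p = smult (of_nat n) p \<longleftrightarrow> p = monom (coeff p n) n"
proof -
  have "coeff (monom 1 1 * pderiv p) k = of_nat k * coeff p k" for k
    by (cases k) (simp_all add: coeff_monom_mult coeff_pderiv)
  then show ?thesis
    by (auto simp: poly_eq_iff coeff_monom)
qed

lemma pencil_euler_defect:
  fixes L M U :: "complex^'n^'n"
  defines "P \<equiv> det (pencil_pmat L M U)"
  assumes w: "w \<noteq> 0" and inv: "invertible (pencil L M U w)"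
  shows "w * poly (pderiv P) w - of_nat CARD('n) * poly P w = poly P w * pencil_logderiv L M U w"
proof -
  let ?A = "matrix_inv (pencil L M U w)"
  have "((1 / w) *m ?A) ** pmat_eval (pencil_pmat L M U) w = mat 1"
    using w by (simp add: pmat_eval_pencil_pmat matrix_inv_left[OF inv])
  then have "poly (pderiv P) w = poly P w * trace ((M + (2 * w) *m U) ** ((1 / w) *m ?A))"
    unfolding P_def pmat_eval_deriv_pencil_pmat[of L M U w, symmetric] by (rule poly_pderiv_det)
  then have "w * poly (pderiv P) w = poly P w * trace (?A ** (M + (2 * w) *m U))"
    using w by (simp add: trace_mul_sym[of "M + (2 * w) *m U" ?A])
  also have "M + (2 * w) *m U = pencil L M U w + (w *m U - (1 / w) *m L)"
    by (simp add: vec_eq_iff pencil_def field_simps)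
  also have "trace (?A ** (pencil L M U w + (w *m U - (1 / w) *m L))) =
             of_nat CARD('n) + pencil_logderiv L M U w"
    by (simp only: matrix_add_ldistrib trace_add trace_matrix_inv_mult[OF inv] pencil_logderiv_def)
  finally show ?thesis
    by (simp add: algebra_simps)
qed

lemma det_pencil_const_if_logderiv_zero:
  fixes L M U :: "complex^'n^'n"
  assumes S: "infinite S" "0 \<notin> S"
    and logderiv: "\<And>w. w \<in> S \<Longrightarrow> invertible (pencil L M U w) \<Longrightarrow> pencil_logderiv L M U w = 0"
    and w: "w \<noteq> 0"
  shows "det (pencil L M U w) = det (pencil L M U 1)"
proof -
  define P where "P = det (pencil_pmat L M U)"
  have "monom 1 1 * pderiv P = smult (of_nat CARD('n)) P"
  proof (cases "P = 0")
    case False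
    show ?thesis
    proof (rule poly_eq_on_infinite)
      show "infinite {v\<in>S. poly P v \<noteq> 0}"
        using infinite_nonroots[OF S(1) False] .
    next
      fix v
      assume v: "v \<in> {v\<in>S. poly P v \<noteq> 0}"
      have v0: "v \<noteq> 0"
        using v S(2) by auto
      have inv: "invertible (pencil L M U v)"
        using v poly_det_pencil_pmat[OF v0, of L M U] by (simp add: P_def invertible_det_nz)
      show "poly (monom 1 1 * pderiv P) v = poly (smult (of_nat CARD('n)) P) v"
        using pencil_euler_defect[OF v0 inv] logderiv[of v] v inv by (simp add: P_def poly_monom)
    qed
  qed simp
  then have "P = monom (coeff P CARD('n)) CARD('n)"
    using euler_eq_iff_monom by blast
  then have "det (pencil L M U v) = coeff P CARD('n)" if "v \<noteq> 0" for v
    using poly_det_pencil_pmat[OF that, of L M U] that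
    by (metis P_def mult_cancel_left poly_monom power_eq_0_iff mult.commute)
  then show ?thesis
    using w by simp
qed

lemma logderiv_zero_if_det_pencil_const:
  fixes L M U :: "complex^'n^'n"
  assumes const: "\<And>v. v \<noteq> 0 \<Longrightarrow> det (pencil L M U v) = det (pencil L M U 1)"
    and w: "w \<noteq> 0" and inv: "invertible (pencil L M U w)"
  shows "pencil_logderiv L M U w = 0"
proof -
  define P where "P = det (pencil_pmat L M U)"
  have "P = monom (det (pencil L M U 1)) CARD('n)"
  proof (rule poly_eq_on_infinite)
    show "infinite (- {0 :: complex})"
      by (simp add: infinite_UNIV_char_0)
  next
    fix v :: complex
    assume "v \<in> - {0}"
    then show "poly P v = poly (monom (det (pencil L M U 1)) CARD('n)) v"
      using const[of v] poly_det_pencil_pmat[of v L M U] by (simp add: P_def poly_monom)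
  qed
  then have "monom 1 1 * pderiv P = smult (of_nat CARD('n)) P"
    by (subst euler_eq_iff_monom) simp
  then have "w * poly (pderiv P) w = of_nat CARD('n) * poly P w"
    by (metis poly_monom poly_mult poly_smult power_one_right mult_1)
  moreover have "poly P w \<noteq> 0"
    using w inv by (simp add: P_def poly_det_pencil_pmat invertible_det_nz)
  ultimately show ?thesis
    using pencil_euler_defect[OF w inv] by (simp add: P_def)
qed

subsection \<open>\<open>T\<^sub>1\<close> and \<open>T\<^sub>2\<close> as logarithmic derivatives\<close>

definition Hw :: "complex^'n^'n \<Rightarrow> complex \<Rightarrow> complex^'n^'n" where
  "Hw C w = (w / 2) *m C + (1 / (2 * w)) *m adj C"

lemma exp_i_of_real_eq: "exp (\<i> * of_real t) = 1 / exp (- \<i> * of_real t)"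
  by (simp add: exp_minus divide_inverse)

lemma pencil_eq_sub_Hw:
  "pencil (- (1 / 2) *m adj C) (\<mu> *m mat 1) (- (1 / 2) *m C) w = \<mu> *m mat 1 - Hw C w"
  by (simp add: vec_eq_iff pencil_def Hw_def)

lemma T1_eq_pencil_logderiv:
  fixes C :: "complex^'n^'n" and t :: real and \<mu> :: complex
  defines "w \<equiv> exp (- \<i> * of_real t)"
    and "L \<equiv> - (1 / 2) *m adj C" and "U \<equiv> - (1 / 2) *m C"
  shows "T1_defined C t \<mu> \<longleftrightarrow> invertible (pencil L (\<mu> *m mat 1) U w)"
    and "T1 C t \<mu> = \<i> * pencil_logderiv L (\<mu> *m mat 1) U w"
proof -
  have w: "w \<noteq> 0"
    by (simp add: w_def)
  have pencil: "pencil L (\<mu> *m mat 1) U w = \<mu> *m mat 1 - Hw C w"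
    unfolding L_def U_def by (rule pencil_eq_sub_Hw)
  have H: "Hm C t = Hw C w"
    by (simp add: vec_eq_iff Hm_def Hw_def w_def exp_i_of_real_eq field_simps)
  have K: "Km C t = \<i> *m (w *m U - (1 / w) *m L)"
    by (simp add: vec_eq_iff Km_def L_def U_def w_def exp_i_of_real_eq field_simps)
  show "T1_defined C t \<mu> \<longleftrightarrow> invertible (pencil L (\<mu> *m mat 1) U w)"
    by (simp add: T1_defined_def pencil H)
  show "T1 C t \<mu> = \<i> * pencil_logderiv L (\<mu> *m mat 1) U w"
    by (simp add: T1_def pencil_logderiv_def pencil H K)
qed

lemma T2_eq_pencil_logderiv:
  fixes C :: "complex^'n^'n" and t :: real and lam :: complex
  defines "w \<equiv> exp (- \<i> * of_real t)"
    and "L \<equiv> - (lam / 2) *m adj C" and "M \<equiv> lam\<^sup>2 *m mat 1 - (1 / 4) *m defect C"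
    and "U \<equiv> - (lam / 2) *m C"
  shows "T2_defined C t lam \<longleftrightarrow> invertible (pencil L M U w)"
    and "T2 C t lam = \<i> * pencil_logderiv L M U w"
proof -
  have w: "w \<noteq> 0"
    by (simp add: w_def)
  have pencil: "lam\<^sup>2 *m mat 1 - lam *m Hm C t - (1 / 4) *m defect C = pencil L M U w"
    using w by (simp add: vec_eq_iff pencil_def Hm_def L_def M_def U_def w_def exp_i_of_real_eq
        field_simps)
  have K: "lam *m Km C t = \<i> *m (w *m U - (1 / w) *m L)"
    by (simp add: vec_eq_iff Km_def L_def U_def w_def exp_i_of_real_eq field_simps)
  show "T2_defined C t lam \<longleftrightarrow> invertible (pencil L M U w)"
    by (simp add: T2_defined_def pencil)
  show "T2 C t lam = \<i> * pencil_logderiv L M U w"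
    by (simp add: T2_def pencil_logderiv_def pencil K)
qed

lemma infinite_range_exp_i: "infinite (range (\<lambda>t::real. exp (- \<i> * of_real t)))"
proof -
  have "inj_on (\<lambda>t::real. exp (- \<i> * of_real t)) {0<..<1}"
  proof (rule inj_onI)
    fix s t :: real
    assume st: "s \<in> {0<..<1}" "t \<in> {0<..<1}" and eq: "exp (- \<i> * of_real s) = exp (- \<i> * of_real t)"
    have "\<bar>Im (- \<i> * of_real s) - Im (- \<i> * of_real t)\<bar> < 2 * pi"
      using st pi_gt3 by auto
    then have "- \<i> * of_real s = - \<i> * (of_real t :: complex)"
      using exp_complex_eqI eq by blast
    then show "s = t"
      by simp
  qed
  moreover have "infinite {0<..<(1::real)}"
    by (rule infinite_Ioo) simp
  ultimately have "infinite ((\<lambda>t::real. exp (- \<i> * of_real t)) ` {0<..<1})"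
    using finite_imageD by blast
  then show ?thesis
    using infinite_super[OF image_mono[OF subset_UNIV]] by blast
qed

lemma det_pencil_const_if_T2_zero:
  assumes T2: "\<forall>t lam. T2_defined C t lam \<longrightarrow> T2 C t lam = 0" and w: "w \<noteq> 0"
  shows "det (pencil (- (lam / 2) *m adj C) (lam\<^sup>2 *m mat 1 - (1 / 4) *m defect C) (- (lam / 2) *m C) w)
       = det (pencil (- (lam / 2) *m adj C) (lam\<^sup>2 *m mat 1 - (1 / 4) *m defect C) (- (lam / 2) *m C) 1)"
  using infinite_range_exp_i _ _ w
proof (rule det_pencil_const_if_logderiv_zero)
  show "0 \<notin> range (\<lambda>t::real. exp (- \<i> * of_real t))"
    by auto
next
  fix v
  assume "v \<in> range (\<lambda>t::real. exp (- \<i> * of_real t))"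
    "invertible (pencil (- (lam / 2) *m adj C) (lam\<^sup>2 *m mat 1 - (1 / 4) *m defect C) (- (lam / 2) *m C) v)"
  moreover from calculation obtain t :: real where "v = exp (- \<i> * of_real t)"
    by blast
  ultimately have "T2 C t lam = 0"
    using T2 T2_eq_pencil_logderiv(1)[of C t lam] by simp
  then show "pencil_logderiv (- (lam / 2) *m adj C) (lam\<^sup>2 *m mat 1 - (1 / 4) *m defect C) (- (lam / 2) *m C) v = 0"
    using T2_eq_pencil_logderiv(2)[of C t lam] \<open>v = exp (- \<i> * of_real t)\<close> by simp
qed

lemma T1_zero_if_det_Hw_const:
  assumes const: "\<And>w. w \<noteq> 0 \<Longrightarrow> det (\<mu> *m mat 1 - Hw C w) = det (\<mu> *m mat 1 - Hw C 1)"
    and "T1_defined C t \<mu>"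
  shows "T1 C t \<mu> = 0"
proof -
  let ?L = "- (1 / 2) *m adj C" and ?M = "\<mu> *m mat 1" and ?U = "- (1 / 2) *m C"
    and ?w = "exp (- \<i> * of_real t)"
  have pencil_const: "\<And>v. v \<noteq> 0 \<Longrightarrow> det (pencil ?L ?M ?U v) = det (pencil ?L ?M ?U 1)"
    unfolding pencil_eq_sub_Hw by (rule const)
  have "invertible (pencil ?L ?M ?U ?w)"
    using assms(2) T1_eq_pencil_logderiv(1) by blast
  then have "pencil_logderiv ?L ?M ?U ?w = 0"
    using logderiv_zero_if_det_pencil_const[OF pencil_const] by simp
  then show ?thesis
    by (simp only: T1_eq_pencil_logderiv(2) mult_zero_right)
qed

subsection \<open>\<open>Q\<^sub>C\<close> depends only on \<open>xy\<close>\<close>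

definition Q_det :: "complex^'n^'n \<Rightarrow> complex \<Rightarrow> complex \<Rightarrow> complex" where
  "Q_det C x y = det (mat 1 - x *m C - y *m adj C - (x * y) *m defect C)"

lemma pencil_T2_eq_Q_matrix:
  assumes "r \<noteq> 0" "w \<noteq> 0"
  shows "pencil (- (1 / (4 * r)) *m adj C) ((1 / (2 * r))\<^sup>2 *m mat 1 - (1 / 4) *m defect C)
           (- (1 / (4 * r)) *m C) w =
         (1 / (2 * r))\<^sup>2 *m (mat 1 - (r * w) *m C - (r / w) *m adj C - ((r * w) * (r / w)) *m defect C)"
  using assms by (simp add: vec_eq_iff pencil_def field_simps power2_eq_square)

lemma Q_det_eq_Q_det_mult:
  fixes C :: "complex^'n^'n"
  assumes T2: "\<forall>t lam. T2_defined C t lam \<longrightarrow> T2 C t lam = 0" and "x \<noteq> 0" "y \<noteq> 0"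
  shows "Q_det C x y = Q_det C (x * y) 1"
proof -
  define r where "r = csqrt (x * y)"
  have r2: "r * r = x * y"
    unfolding r_def by (metis power2_csqrt power2_eq_square)
  then have r: "r \<noteq> 0"
    using assms by auto
  define lam where "lam = 1 / (2 * r)"
  have lam2: "lam / 2 = 1 / (4 * r)"
    by (simp add: lam_def)
  let ?P = "pencil (- (1 / (4 * r)) *m adj C) ((1 / (2 * r))\<^sup>2 *m mat 1 - (1 / 4) *m defect C)
              (- (1 / (4 * r)) *m C)"
  have "det (?P (x / r)) = det (?P r)"
    using det_pencil_const_if_T2_zero[OF T2, of "x / r" lam]
      det_pencil_const_if_T2_zero[OF T2, of r lam] assms r
    by (simp add: lam2 flip: lam_def)
  moreover have "r * (x / r) = x" "r / (x / r) = y" "r / r = 1"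
    using r r2 assms by (simp_all add: field_simps)
  ultimately show ?thesis
    using assms r by (simp add: pencil_T2_eq_Q_matrix det_msc Q_det_def r2)
qed

subsection \<open>Vanishing of the mixed traces \<open>tr (C C*\<^sup>k)\<close>\<close>

definition Y_mat :: "complex^'n^'n \<Rightarrow> nat \<Rightarrow> complex \<Rightarrow> complex^'n^'n" where
  "Y_mat C M c = c *m C + (\<Sum>j<M. (1 / c) ^ j *m mpow (adj C) j)"

text \<open>If \<open>mpow (adj C) M = 0\<close>, the sum in \<open>Y_mat C M c\<close> is the inverse of \<open>mat 1 - (1 / c) *m adj C\<close>.\<close>

lemma det_one_sub_Y_mat:
  fixes C :: "complex^'n^'n"
  assumes nil: "mpow (adj C) M = 0" and c: "c \<noteq> 0"
  shows "det (mat 1 - x *m Y_mat C M c) = Q_det C (c * x) (1 / c)"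
proof -
  let ?R = "\<Sum>j<M. (1 / c) ^ j *m mpow (adj C) j"
  have R: "(mat 1 - (1 / c) *m adj C) ** ?R = mat 1"
    using matrix_geometric_sum[of "1 / c" "adj C" M] nil by simp
  have "(mat 1 - (1 / c) *m adj C) ** (mat 1 - x *m Y_mat C M c) =
        (mat 1 - (1 / c) *m adj C) - x *m ((mat 1 - (1 / c) *m adj C) ** (c *m C) + mat 1)"
    by (simp add: Y_mat_def matrix_diff_ldistrib matrix_add_ldistrib R)
  also have "(mat 1 - (1 / c) *m adj C) ** (c *m C) = c *m C - adj C ** C"
    using c by (simp add: matrix_diff_rdistrib msc_diff)
  also have "(mat 1 - (1 / c) *m adj C) - x *m ((c *m C - adj C ** C) + mat 1) =
        mat 1 - (c * x) *m C - (1 / c) *m adj C - ((c * x) * (1 / c)) *m defect C"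
    using c by (simp add: vec_eq_iff defect_def field_simps)
  finally have "det (mat 1 - (1 / c) *m adj C) * det (mat 1 - x *m Y_mat C M c) =
             Q_det C (c * x) (1 / c)"
    by (simp add: Q_det_def flip: det_mul)
  then show ?thesis
    using det_one_sub_nilpotent[OF nil] by simp
qed

lemma recip_charpoly_Y_mat_const:
  fixes C :: "complex^'n^'n"
  assumes Q: "\<And>x y. x \<noteq> 0 \<Longrightarrow> y \<noteq> 0 \<Longrightarrow> Q_det C x y = Q_det C (x * y) 1"
    and nil: "mpow (adj C) M = 0" and c: "c \<noteq> 0"
  shows "recip_charpoly (Y_mat C M c) = recip_charpoly (Y_mat C M 1)"
proof (rule poly_eq_on_infinite[OF infinite_UNIV_char_0])
  fix s :: complex
  show "poly (recip_charpoly (Y_mat C M c)) s = poly (recip_charpoly (Y_mat C M 1)) s"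
    using Q[of "c * s" "1 / c"] det_one_sub_Y_mat[OF nil c, of s] det_one_sub_Y_mat[OF nil, of 1 s] c
    by (cases "s = 0") (simp_all add: poly_recip_charpoly)
qed

lemma trace_sq_geometric_nilpotent:
  fixes N :: "complex^'n^'n"
  assumes nil: "mpow N m = 0" and M: "0 < M"
  shows "trace ((\<Sum>j<M. a ^ j *m mpow N j) ** (\<Sum>j<M. a ^ j *m mpow N j)) = of_nat CARD('n)"
proof -
  have tr: "trace (mpow N j ** mpow N l) = (if j = 0 \<and> l = 0 then of_nat CARD('n) else 0)" for j l
    using trace_mpow_nilpotent[OF nil, of "j + l"] by (auto simp: trace_I simp flip: mpow_add)
  have "trace ((\<Sum>j<M. a ^ j *m mpow N j) ** (\<Sum>j<M. a ^ j *m mpow N j)) =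
        (\<Sum>j<M. \<Sum>l<M. a ^ j * (a ^ l * trace (mpow N l ** mpow N j)))"
    by (simp add: matrix_sum_left matrix_sum_right trace_sum sum_distrib_left)
  also have "\<dots> = (\<Sum>j<M. if j = 0 then of_nat CARD('n) else 0)"
    using M by (intro sum.cong refl) (simp add: tr if_distrib sum.delta cong: if_cong)
  also have "\<dots> = of_nat CARD('n)"
    using M by (simp add: sum.delta)
  finally show ?thesis .
qed

lemma trace_sq_Y_mat:
  fixes C :: "complex^'n^'n"
  assumes nil: "mpow C m = 0" and M: "0 < M"
  shows "trace (mpow (Y_mat C M c) 2) =
    2 * c * (\<Sum>j<M. (1 / c) ^ j * trace (C ** mpow (adj C) j)) + of_nat CARD('n)"
proof -
  define R where "R = (\<Sum>j<M. (1 / c) ^ j *m mpow (adj C) j)"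
  have nil_adj: "mpow (adj C) m = 0"
    using nil by (metis mpow_adj adj_zero)
  have "mpow (Y_mat C M c) 2 = (c * c) *m (C ** C) + c *m (C ** R) + c *m (R ** C) + R ** R"
    by (simp add: Y_mat_def flip: R_def)
      (simp add: numeral_eq_Suc matrix_add_ldistrib matrix_add_rdistrib msc_add add.assoc)
  moreover have "trace (R ** R) = of_nat CARD('n)"
    unfolding R_def using nil_adj M by (rule trace_sq_geometric_nilpotent)
  moreover have "trace (C ** C) = 0"
    using trace_mpow_nilpotent[OF nil, of 2] by (simp add: numeral_eq_Suc)
  moreover have "trace (C ** R) = (\<Sum>j<M. (1 / c) ^ j * trace (C ** mpow (adj C) j))"
    by (simp add: R_def matrix_sum_right trace_sum)
  ultimately show ?thesis
    by (simp add: trace_add trace_mul_sym[of R C])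
qed

lemma trace_mult_mpow_adj_eq_0:
  fixes C :: "complex^'n^'n"
  assumes Q: "\<And>x y. x \<noteq> 0 \<Longrightarrow> y \<noteq> 0 \<Longrightarrow> Q_det C x y = Q_det C (x * y) 1"
    and nil: "mpow C m = 0" and k: "2 \<le> k"
  shows "trace (C ** mpow (adj C) k) = 0"
proof -
  define M where "M = m + k + 1"
  have M: "0 < M"
    by (simp add: M_def)
  have nil_adj: "mpow (adj C) M = 0"
    using mpow_eq_0_mono[of "adj C" m M] nil by (simp add: M_def flip: mpow_adj)
  define f where "f = (\<Sum>j<M. monom (trace (C ** mpow (adj C) j)) j)"
  have poly_f: "poly f u = (\<Sum>j<M. u ^ j * trace (C ** mpow (adj C) j))" for u
    by (simp add: f_def poly_sum poly_monom mult.commute)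
  have f_scaling: "c * poly f (1 / c) = poly f 1" if "c \<noteq> 0" for c
  proof -
    have "trace (mpow (Y_mat C M c) 2) = trace (mpow (Y_mat C M 1) 2)"
      using trace_mpow_eq_if_recip_charpoly_eq[OF recip_charpoly_Y_mat_const[OF Q nil_adj that]]
      by simp
    then have "2 * (c * poly f (1 / c)) = 2 * poly f 1"
      unfolding trace_sq_Y_mat[OF nil M] poly_f by (simp add: mult.assoc)
    then show ?thesis
      by simp
  qed
  have "f = [:0, poly f 1:]"
  proof (rule poly_eq_on_infinite)
    show "infinite (- {0 :: complex})"
      by (simp add: infinite_UNIV_char_0)
  next
    fix u :: complex
    assume "u \<in> - {0}"
    then show "poly f u = poly [:0, poly f 1:] u"
      using f_scaling[of "1 / u"] by (simp add: field_simps)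
  qed
  moreover have "coeff [:0, poly f 1:] k = 0"
    using k by (simp add: coeff_pCons split: nat.split)
  moreover have "coeff f k = trace (C ** mpow (adj C) k)"
    by (simp add: f_def coeff_sum coeff_monom M_def)
  ultimately show ?thesis
    by simp
qed

subsection \<open>Traces of powers of \<open>H\<close>\<close>

lemma trace_mpow_lincomb:
  fixes A B :: "complex^'n^'n" and a b :: complex
  defines "F \<equiv> a *m A + b *m B"
  shows "trace (mpow F 1) = a * trace A + b * trace B"
    and "trace (mpow F 2) = a\<^sup>2 * trace (A ** A) + 2 * a * b * trace (A ** B) + b\<^sup>2 * trace (B ** B)"
    and "trace (mpow F 3) = a ^ 3 * trace (A ** (A ** A)) + 3 * a\<^sup>2 * b * trace (A ** (A ** B))
           + 3 * a * b\<^sup>2 * trace (A ** (B ** B)) + b ^ 3 * trace (B ** (B ** B))"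
    and "trace (mpow F 4) = a ^ 4 * trace (A ** (A ** (A ** A))) + 4 * a ^ 3 * b * trace (A ** (A ** (A ** B)))
           + 4 * a * b ^ 3 * trace (A ** (B ** (B ** B))) + b ^ 4 * trace (B ** (B ** (B ** B)))
           + a\<^sup>2 * b\<^sup>2 * (4 * trace (A ** (A ** (B ** B))) + 2 * trace (A ** (B ** (A ** B))))"
proof -
  have rot3: "trace (A ** (B ** A)) = trace (A ** (A ** B))" "trace (B ** (A ** A)) = trace (A ** (A ** B))"
    "trace (B ** (A ** B)) = trace (A ** (B ** B))" "trace (B ** (B ** A)) = trace (A ** (B ** B))"
    by (metis trace_rotate3)+
  have rot4:
    "trace (A ** (A ** (B ** A))) = trace (A ** (A ** (A ** B)))"
    "trace (A ** (B ** (A ** A))) = trace (A ** (A ** (A ** B)))"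
    "trace (B ** (A ** (A ** A))) = trace (A ** (A ** (A ** B)))"
    "trace (B ** (A ** (B ** B))) = trace (A ** (B ** (B ** B)))"
    "trace (B ** (B ** (A ** B))) = trace (A ** (B ** (B ** B)))"
    "trace (B ** (B ** (B ** A))) = trace (A ** (B ** (B ** B)))"
    "trace (A ** (B ** (B ** A))) = trace (A ** (A ** (B ** B)))"
    "trace (B ** (B ** (A ** A))) = trace (A ** (A ** (B ** B)))"
    "trace (B ** (A ** (A ** B))) = trace (A ** (A ** (B ** B)))"
    "trace (B ** (A ** (B ** A))) = trace (A ** (B ** (A ** B)))"
    by (metis trace_rotate4)+
  show "trace (mpow F 1) = a * trace A + b * trace B"
    by (simp add: F_def trace_add)
  show "trace (mpow F 2) = a\<^sup>2 * trace (A ** A) + 2 * a * b * trace (A ** B) + b\<^sup>2 * trace (B ** B)"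
    by (simp add: F_def numeral_eq_Suc matrix_add_ldistrib matrix_add_rdistrib trace_add
        trace_mul_sym[of B A] algebra_simps power2_eq_square)
  show "trace (mpow F 3) = a ^ 3 * trace (A ** (A ** A)) + 3 * a\<^sup>2 * b * trace (A ** (A ** B))
           + 3 * a * b\<^sup>2 * trace (A ** (B ** B)) + b ^ 3 * trace (B ** (B ** B))"
    by (simp add: F_def numeral_eq_Suc matrix_add_ldistrib matrix_add_rdistrib trace_add rot3
        algebra_simps power2_eq_square power3_eq_cube)
  show "trace (mpow F 4) = a ^ 4 * trace (A ** (A ** (A ** A))) + 4 * a ^ 3 * b * trace (A ** (A ** (A ** B)))
           + 4 * a * b ^ 3 * trace (A ** (B ** (B ** B))) + b ^ 4 * trace (B ** (B ** (B ** B)))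
           + a\<^sup>2 * b\<^sup>2 * (4 * trace (A ** (A ** (B ** B))) + 2 * trace (A ** (B ** (A ** B))))"
    by (simp add: F_def numeral_eq_Suc matrix_add_ldistrib matrix_add_rdistrib trace_add rot4
        algebra_simps power2_eq_square power3_eq_cube power4_eq_xxxx)
qed

lemma trace_mpow_Hw_eq:
  fixes C :: "complex^'n^'n"
  assumes nil: "mpow C m = 0"
    and mixed: "\<And>k. 2 \<le> k \<Longrightarrow> trace (C ** mpow (adj C) k) = 0"
    and w: "w \<noteq> 0" and k: "0 < k" "k \<le> 4"
  shows "trace (mpow (Hw C w) k) = trace (mpow (Hw C 1) k)"
proof -
  let ?B = "adj C"
  have nil_adj: "mpow ?B m = 0"
    using nil by (metis mpow_adj adj_zero)
  have pure: "trace C = 0" "trace ?B = 0" "trace (C ** C) = 0" "trace (?B ** ?B) = 0"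
    "trace (C ** (C ** C)) = 0" "trace (?B ** (?B ** ?B)) = 0"
    "trace (C ** (C ** (C ** C))) = 0" "trace (?B ** (?B ** (?B ** ?B))) = 0"
    using trace_mpow_nilpotent[OF nil, of 1] trace_mpow_nilpotent[OF nil_adj, of 1]
      trace_mpow_nilpotent[OF nil, of 2] trace_mpow_nilpotent[OF nil_adj, of 2]
      trace_mpow_nilpotent[OF nil, of 3] trace_mpow_nilpotent[OF nil_adj, of 3]
      trace_mpow_nilpotent[OF nil, of 4] trace_mpow_nilpotent[OF nil_adj, of 4]
    by (simp_all add: numeral_eq_Suc)
  have mixed': "trace (C ** (?B ** ?B)) = 0" "trace (C ** (?B ** (?B ** ?B))) = 0"
    using mixed[of 2] mixed[of 3] by (simp_all add: numeral_eq_Suc)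
  have "trace (C ** (C ** ?B)) = cnj (trace (C ** (?B ** ?B)))"
    "trace (C ** (C ** (C ** ?B))) = cnj (trace (C ** (?B ** (?B ** ?B))))"
    by (simp_all add: adj_mult matrix_mul_assoc flip: trace_adj)
  with mixed' have mixed_adj: "trace (C ** (C ** ?B)) = 0" "trace (C ** (C ** (C ** ?B))) = 0"
    by simp_all
  have Hw: "Hw C v = (v / 2) *m C + (1 / (2 * v)) *m ?B" for v
    by (simp add: Hw_def)
  \<comment> \<open>In \<open>trace_mpow_lincomb\<close> with \<open>a = w / 2\<close>, \<open>b = 1 / (2 * w)\<close> every term with unequal powers
    of \<open>a\<close> and \<open>b\<close> vanishes, and \<open>a * b = 1 / 4\<close>.\<close>
  from k have "k = 1 \<or> k = 2 \<or> k = 3 \<or> k = 4"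
    by auto
  then show ?thesis
    using w by (elim disjE) (simp_all add: Hw trace_add trace_mpow_lincomb pure mixed' mixed_adj field_simps)
qed

lemma det_Hw_const:
  fixes C :: "complex^'n^'n"
  assumes "CARD('n) \<le> 4" and "mpow C m = 0"
    and "\<And>k. 2 \<le> k \<Longrightarrow> trace (C ** mpow (adj C) k) = 0" and "w \<noteq> 0"
  shows "det (\<mu> *m mat 1 - Hw C w) = det (\<mu> *m mat 1 - Hw C 1)"
  using assms by (intro det_sub_eq_if_recip_charpoly_eq recip_charpoly_eq_if_trace_mpow_eq
      trace_mpow_Hw_eq) auto

theorem mainTheorem10:
  fixes C :: "complex^'n^'n"
  assumes "CARD('n) \<le> 4"
    and "nilpotent_mat C"
    and "contraction C"
    and "\<forall>t lam. T2_defined C t lam \<longrightarrow> T2 C t lam = 0"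
  shows "\<forall>t \<mu>. T1_defined C t \<mu> \<longrightarrow> T1 C t \<mu> = 0"
proof (intro allI impI)
  fix t \<mu>
  assume T1_defined: "T1_defined C t \<mu>"
  obtain m where nil: "mpow C m = 0"
    using assms(2) unfolding nilpotent_mat_def by blast
  have "trace (C ** mpow (adj C) k) = 0" if "2 \<le> k" for k
    using trace_mult_mpow_adj_eq_0[OF Q_det_eq_Q_det_mult[OF assms(4)] nil that] .
  then have "det (\<mu> *m mat 1 - Hw C w) = det (\<mu> *m mat 1 - Hw C 1)" if "w \<noteq> 0" for w
    using det_Hw_const[OF assms(1) nil _ that] by blast
  then show "T1 C t \<mu> = 0"
    using T1_zero_if_det_Hw_const T1_defined by blast
qed

end
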